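(* Let $q=|q|e^{i\varphi}$, where $|q|\in L^\infty(\mathbb{R})$ never vanishes and $\varphi:\mathbb{R}\to\mathbb{R}$ is locally absolutely continuous with $\partial_x\varphi\in L^\infty(\mathbb{R};\mathbb{R})$. Let $L=\begin{pmatrix} i\partial_x & -iq\\ i\bar q & -i\partial_x\end{pmatrix}:H^1(\mathbb{R};\mathbb{C}^2)\to L^2(\mathbb{R};\mathbb{C}^2)$. Then every eigenvalue $\lambda\in\mathbb{R}$ of $L$ satisfies, for all $c\in\mathbb{R}$, $$c-\lambda\le \Big\|\Big(\tfrac12\partial_x\varphi-|q|+c\Big)^{(+)}\Big\|_{L^\infty}\quad\text{or}\quad c+\lambda\le \Big\|\Big(\tfrac12\partial_x\varphi+|q|-c\Big)^{(-)}\Big\|_{L^\infty}.$$ In particular, if $|q|\ge c+\frac12|\partial_x\varphi|$ pointwise for some $c>0$, then $L$ has no eigenvalues in $(-c,c)$.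
   Context: For a real function $f$, $f^{(+)}=\max\{f,0\}$ and $f^{(-)}=\max\{-f,0\}$ denote its positive and negative parts. *)

theory Defs
  imports "HOL-Analysis.Analysis" "HOL-Probability.Essential_Supremum"
begin

definition abs_cont_on :: "real set \<Rightarrow> (real \<Rightarrow> 'b::real_normed_vector) \<Rightarrow> bool" where
  "abs_cont_on S f \<longleftrightarrow>
     (\<forall>\<epsilon>>0. \<exists>\<delta>>0. \<forall>(n::nat) (a::nat \<Rightarrow> real) b.
        (\<forall>k<n. a k \<le> b k \<and> {a k..b k} \<subseteq> S) \<and>
        (\<forall>j<n. \<forall>k<n. j \<noteq> k \<longrightarrow> {a j<..<b j} \<inter> {a k<..<b k} = {}) \<and>
        (\<Sum>k<n. b k - a k) < \<delta>
        \<longrightarrow> (\<Sum>k<n. norm (f (b k) - f (a k))) < \<epsilon>)"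

definition loc_abs_cont :: "(real \<Rightarrow> 'b::real_normed_vector) \<Rightarrow> bool" where
  "loc_abs_cont f \<longleftrightarrow> (\<forall>a b. abs_cont_on {a..b} f)"

definition ae_deriv :: "(real \<Rightarrow> 'b::real_normed_vector) \<Rightarrow> (real \<Rightarrow> 'b) \<Rightarrow> bool" where
  "ae_deriv f f' \<longleftrightarrow> (AE x in lborel. (f has_vector_derivative f' x) (at x))"

definition L2 :: "(real \<Rightarrow> complex) \<Rightarrow> bool" where
  "L2 f \<longleftrightarrow> f \<in> borel_measurable lborel \<and> integrable lborel (\<lambda>x. (cmod (f x))\<^sup>2)"

definition Linf :: "(real \<Rightarrow> real) \<Rightarrow> bool" where
  "Linf f \<longleftrightarrow> f \<in> borel_measurable lborel \<and> (\<exists>C. AE x in lborel. \<bar>f x\<bar> \<le> C)"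

definition Linf_norm :: "(real \<Rightarrow> real) \<Rightarrow> real" where
  "Linf_norm f = real_of_ereal (esssup lborel (\<lambda>x. ereal \<bar>f x\<bar>))"

definition pos_part :: "(real \<Rightarrow> real) \<Rightarrow> real \<Rightarrow> real" where
  "pos_part f x = max (f x) 0"

definition neg_part :: "(real \<Rightarrow> real) \<Rightarrow> real \<Rightarrow> real" where
  "neg_part f x = max (- f x) 0"

text \<open>u is in H^1(R;C): u is (a locally AC representative) in L^2 whose a.e. derivative u' is in L^2.\<close>
definition H1 :: "(real \<Rightarrow> complex) \<Rightarrow> (real \<Rightarrow> complex) \<Rightarrow> bool" where
  "H1 u u' \<longleftrightarrow> L2 u \<and> loc_abs_cont u \<and> ae_deriv u u' \<and> L2 u'"

definition is_eigenvalue :: "(real \<Rightarrow> complex) \<Rightarrow> complex \<Rightarrow> bool" where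
  "is_eigenvalue q lam \<longleftrightarrow>
     (\<exists>u1 u2 u1' u2'. H1 u1 u1' \<and> H1 u2 u2' \<and>
        \<not> (AE x in lborel. u1 x = 0 \<and> u2 x = 0) \<and>
        (AE x in lborel.
           \<i> * u1' x - \<i> * q x * u2 x = lam * u1 x \<and>
           \<i> * cnj (q x) * u1 x - \<i> * u2' x = lam * u2 x))"

end

theory Submission
  imports Defs
begin

(* Let (u1, u2) be an eigenfunction for the real eigenvalue l and put w = e^(i phi) conj(u1) u2.
   The eigenvalue equations and q = |q| e^(i phi) give
     (Re w)' = |q| (|u1|^2 + |u2|^2) - (2 l + phi') Im w,
   and |Im w| <= |u1| |u2| <= (|u1|^2 + |u2|^2) / 2. Hence a gap |phi'/2 + l| <= |q| - delta with
   delta > 0 forces (Re w)' >= delta (|u1|^2 + |u2|^2) >= 0 almost everywhere. Being locally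
   absolutely continuous, Re w is then nondecreasing; being integrable over the whole line, it
   vanishes identically, so its derivative vanishes too and u = 0 almost everywhere. Each of the
   two claims amounts to producing such a gap from the negation of its conclusion. *)

section \<open>Absolutely continuous functions\<close>

definition nonoverlapping_in :: "real set \<Rightarrow> nat \<Rightarrow> (nat \<Rightarrow> real) \<Rightarrow> (nat \<Rightarrow> real) \<Rightarrow> bool" where
  "nonoverlapping_in S n a b \<longleftrightarrow>
     (\<forall>k<n. a k \<le> b k \<and> {a k..b k} \<subseteq> S) \<and>
     (\<forall>j<n. \<forall>k<n. j \<noteq> k \<longrightarrow> {a j<..<b j} \<inter> {a k<..<b k} = {})"

lemma nonoverlapping_in_endpoints:
  assumes "nonoverlapping_in S n a b" "k < n"
  shows "a k \<in> S" "b k \<in> S"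
proof -
  have "a k \<le> b k" "{a k..b k} \<subseteq> S"
    using assms unfolding nonoverlapping_in_def by auto
  then show "a k \<in> S" "b k \<in> S"
    by auto
qed

lemma abs_cont_on_altdef:
  "abs_cont_on S f \<longleftrightarrow>
     (\<forall>\<epsilon>>0. \<exists>\<delta>>0. \<forall>n a b. nonoverlapping_in S n a b \<and> (\<Sum>k<n. b k - a k) < \<delta>
        \<longrightarrow> (\<Sum>k<n. norm (f (b k) - f (a k))) < \<epsilon>)"
  by (simp add: abs_cont_on_def nonoverlapping_in_def)

lemma abs_cont_onE:
  assumes "abs_cont_on S f" "\<epsilon> > 0"
  obtains \<delta> where "\<delta> > 0"
    "\<And>n a b. nonoverlapping_in S n a b \<Longrightarrow> (\<Sum>k<n. b k - a k) < \<delta>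
       \<Longrightarrow> (\<Sum>k<n. norm (f (b k) - f (a k))) < \<epsilon>"
proof -
  obtain \<delta> where "\<delta> > 0" and \<delta>: "\<forall>n a b. nonoverlapping_in S n a b \<and> (\<Sum>k<n. b k - a k) < \<delta>
      \<longrightarrow> (\<Sum>k<n. norm (f (b k) - f (a k))) < \<epsilon>"
    using assms unfolding abs_cont_on_altdef by blast
  show thesis
    by (rule that[OF \<open>\<delta> > 0\<close>]) (use \<delta> in blast)
qed

lemma abs_cont_onI:
  assumes "\<And>\<epsilon>. \<epsilon> > 0 \<Longrightarrow> \<exists>\<delta>>0. \<forall>n a b. nonoverlapping_in S n a b \<and> (\<Sum>k<n. b k - a k) < \<delta>
        \<longrightarrow> (\<Sum>k<n. norm (f (b k) - f (a k))) < \<epsilon>"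
  shows "abs_cont_on S f"
  using assms unfolding abs_cont_on_altdef by blast

lemma loc_abs_cont_isCont:
  assumes "loc_abs_cont f"
  shows "isCont f x"
  unfolding isCont_def LIM_eq
proof (intro allI impI)
  fix \<epsilon> :: real
  assume "\<epsilon> > 0"
  have ac: "abs_cont_on {x - 1..x + 1} f"
    using assms unfolding loc_abs_cont_def by blast
  obtain \<delta> where "\<delta> > 0" and \<delta>: "\<And>n a b. nonoverlapping_in {x - 1..x + 1} n a b
      \<Longrightarrow> (\<Sum>k<n. b k - a k) < \<delta> \<Longrightarrow> (\<Sum>k<n. norm (f (b k) - f (a k))) < \<epsilon>"
    by (elim abs_cont_onE[OF ac \<open>\<epsilon> > 0\<close>])
  have "norm (f y - f x) < \<epsilon>" if "norm (y - x) < min \<delta> 1" for y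
  proof (cases "x \<le> y")
    case True
    then have "nonoverlapping_in {x - 1..x + 1} 1 (\<lambda>_. x) (\<lambda>_. y)" "y - x < \<delta>"
      using that by (auto simp: nonoverlapping_in_def)
    then show ?thesis
      using \<delta> by fastforce
  next
    case False
    then have "nonoverlapping_in {x - 1..x + 1} 1 (\<lambda>_. y) (\<lambda>_. x)" "x - y < \<delta>"
      using that by (auto simp: nonoverlapping_in_def)
    then show ?thesis
      using \<delta> by (fastforce simp: norm_minus_commute)
  qed
  then show "\<exists>s>0. \<forall>y. y \<noteq> x \<and> norm (y - x) < s \<longrightarrow> norm (f y - f x) < \<epsilon>"
    using \<open>\<delta> > 0\<close> by (intro exI[of _ "min \<delta> 1"]) auto
qed

lemma abs_cont_on_Pair:
  assumes f: "abs_cont_on S f" and g: "abs_cont_on S g"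
  shows "abs_cont_on S (\<lambda>x. (f x, g x))"
proof (rule abs_cont_onI)
  fix \<epsilon> :: real
  assume "\<epsilon> > 0"
  then have "\<epsilon> / 2 > 0" by simp
  obtain \<delta>f where "\<delta>f > 0" and \<delta>f: "\<And>n a b. nonoverlapping_in S n a b \<Longrightarrow> (\<Sum>k<n. b k - a k) < \<delta>f
      \<Longrightarrow> (\<Sum>k<n. norm (f (b k) - f (a k))) < \<epsilon> / 2"
    by (elim abs_cont_onE[OF f \<open>\<epsilon> / 2 > 0\<close>])
  obtain \<delta>g where "\<delta>g > 0" and \<delta>g: "\<And>n a b. nonoverlapping_in S n a b \<Longrightarrow> (\<Sum>k<n. b k - a k) < \<delta>g
      \<Longrightarrow> (\<Sum>k<n. norm (g (b k) - g (a k))) < \<epsilon> / 2"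
    by (elim abs_cont_onE[OF g \<open>\<epsilon> / 2 > 0\<close>])
  have "(\<Sum>k<n. norm ((f (b k), g (b k)) - (f (a k), g (a k)))) < \<epsilon>"
    if "nonoverlapping_in S n a b" "(\<Sum>k<n. b k - a k) < min \<delta>f \<delta>g" for n a b
  proof -
    have "(\<Sum>k<n. norm ((f (b k), g (b k)) - (f (a k), g (a k))))
        \<le> (\<Sum>k<n. norm (f (b k) - f (a k)) + norm (g (b k) - g (a k)))"
      by (intro sum_mono) (simp only: diff_Pair norm_Pair_le)
    also have "\<dots> < \<epsilon> / 2 + \<epsilon> / 2"
      unfolding sum.distrib using \<delta>f[OF that(1)] \<delta>g[OF that(1)] that(2) by simp
    finally show ?thesis by simp
  qed
  then show "\<exists>\<delta>>0. \<forall>n a b. nonoverlapping_in S n a b \<and> (\<Sum>k<n. b k - a k) < \<delta>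
      \<longrightarrow> (\<Sum>k<n. norm ((f (b k), g (b k)) - (f (a k), g (a k)))) < \<epsilon>"
    using \<open>\<delta>f > 0\<close> \<open>\<delta>g > 0\<close> by (intro exI[of _ "min \<delta>f \<delta>g"] conjI) (simp, blast)
qed

lemma abs_cont_on_dominated:
  assumes f: "abs_cont_on S f" and "M > 0"
    and dom: "\<And>x y. x \<in> S \<Longrightarrow> y \<in> S \<Longrightarrow> norm (g y - g x) \<le> M * norm (f y - f x)"
  shows "abs_cont_on S g"
proof (rule abs_cont_onI)
  fix \<epsilon> :: real
  assume "\<epsilon> > 0"
  then have "\<epsilon> / M > 0" using \<open>M > 0\<close> by simp
  obtain \<delta> where "\<delta> > 0" and \<delta>: "\<And>n a b. nonoverlapping_in S n a b \<Longrightarrow> (\<Sum>k<n. b k - a k) < \<delta>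
      \<Longrightarrow> (\<Sum>k<n. norm (f (b k) - f (a k))) < \<epsilon> / M"
    by (elim abs_cont_onE[OF f \<open>\<epsilon> / M > 0\<close>])
  have "(\<Sum>k<n. norm (g (b k) - g (a k))) < \<epsilon>"
    if "nonoverlapping_in S n a b" "(\<Sum>k<n. b k - a k) < \<delta>" for n a b
  proof -
    have "(\<Sum>k<n. norm (g (b k) - g (a k))) \<le> M * (\<Sum>k<n. norm (f (b k) - f (a k)))"
      unfolding sum_distrib_left using nonoverlapping_in_endpoints[OF that(1)]
      by (intro sum_mono dom) auto
    also have "\<dots> < M * (\<epsilon> / M)"
      using \<delta>[OF that] \<open>M > 0\<close> by (intro mult_strict_left_mono)
    finally show ?thesis using \<open>M > 0\<close> by simp
  qed
  then show "\<exists>\<delta>>0. \<forall>n a b. nonoverlapping_in S n a b \<and> (\<Sum>k<n. b k - a k) < \<delta>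
      \<longrightarrow> (\<Sum>k<n. norm (g (b k) - g (a k))) < \<epsilon>"
    using \<open>\<delta> > 0\<close> by blast
qed

lemma tagged_partial_division_real_interval:
  fixes B :: "(real \<times> real set) set"
  assumes "B tagged_partial_division_of S" "(x, K) \<in> B"
  shows "K = {Inf K..Sup K}" "Inf K \<le> Sup K" "K \<subseteq> S"
proof -
  obtain u v where "K = cbox u v"
    using tagged_partial_division_ofD(4)[OF assms] by blast
  moreover have "x \<in> K" "K \<subseteq> S"
    using tagged_partial_division_ofD(2,3)[OF assms] by auto
  ultimately have "K = {u..v}" "u \<le> v" "K \<subseteq> S"
    by (auto simp: cbox_interval)
  then show "K = {Inf K..Sup K}" "Inf K \<le> Sup K" "K \<subseteq> S"
    by auto
qed

lemma abs_cont_on_tagged_partial_division: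
  fixes f :: "real \<Rightarrow> 'a::real_normed_vector"
  assumes "abs_cont_on S f" "\<epsilon> > 0"
  obtains \<delta> where "\<delta> > 0"
    "\<And>B. B tagged_partial_division_of S \<Longrightarrow> (\<Sum>(x, K)\<in>B. Sup K - Inf K) < \<delta>
       \<Longrightarrow> (\<Sum>(x, K)\<in>B. norm (f (Sup K) - f (Inf K))) < \<epsilon>"
proof -
  obtain \<delta> where "\<delta> > 0" and \<delta>: "\<And>n a b. nonoverlapping_in S n a b \<Longrightarrow> (\<Sum>k<n. b k - a k) < \<delta>
      \<Longrightarrow> (\<Sum>k<n. norm (f (b k) - f (a k))) < \<epsilon>"
    by (elim abs_cont_onE[OF assms])
  have bound: "(\<Sum>(x, K)\<in>B. norm (f (Sup K) - f (Inf K))) < \<epsilon>"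
    if B: "B tagged_partial_division_of S" and small: "(\<Sum>(x, K)\<in>B. Sup K - Inf K) < \<delta>" for B
  proof -
    obtain h where h: "bij_betw h {..<card B} B"
      using ex_bij_betw_nat_finite[OF tagged_partial_division_ofD(1)[OF B]]
      by (auto simp: atLeast0LessThan)
    define a where "a k = Inf (snd (h k))" for k
    define b where "b k = Sup (snd (h k))" for k
    have hB: "h k \<in> B" if "k < card B" for k
      using h that by (auto simp: bij_betw_def)
    have K: "snd (h k) = {a k..b k}" "a k \<le> b k" "{a k..b k} \<subseteq> S" if "k < card B" for k
      using tagged_partial_division_real_interval[OF B, of "fst (h k)" "snd (h k)"] hB[OF that]
      unfolding a_def b_def by auto
    have "{a j<..<b j} \<inter> {a k<..<b k} = {}" if "j < card B" "k < card B" "j \<noteq> k" for j k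
    proof -
      have "h j \<noteq> h k"
        using h that by (auto simp: bij_betw_def inj_on_def)
      then have "interior (snd (h j)) \<inter> interior (snd (h k)) = {}"
        using tagged_partial_division_ofD(5)[OF B, of "fst (h j)" "snd (h j)" "fst (h k)" "snd (h k)"]
          hB[OF that(1)] hB[OF that(2)] by simp
      then show ?thesis
        using K[OF that(1)] K[OF that(2)] by simp
    qed
    then have nonoverlapping: "nonoverlapping_in S (card B) a b"
      using K unfolding nonoverlapping_in_def by blast
    have length: "(\<Sum>k<card B. b k - a k) = (\<Sum>(x, K)\<in>B. Sup K - Inf K)"
      using sum.reindex_bij_betw[OF h, of "\<lambda>(x, K). Sup K - Inf K"]
      by (simp add: a_def b_def case_prod_beta)
    have variation: "(\<Sum>k<card B. norm (f (b k) - f (a k))) = (\<Sum>(x, K)\<in>B. norm (f (Sup K) - f (Inf K)))"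
      using sum.reindex_bij_betw[OF h, of "\<lambda>(x, K). norm (f (Sup K) - f (Inf K))"]
      by (simp add: a_def b_def case_prod_beta)
    show ?thesis
      using \<delta>[OF nonoverlapping] small by (simp only: length variation)
  qed
  show thesis
    by (rule that[OF \<open>\<delta> > 0\<close> bound])
qed

lemma has_real_derivative_local_bound:
  fixes Q :: "real \<Rightarrow> real"
  assumes "(Q has_real_derivative d) (at x)" "e > 0"
  obtains r where "r > 0" "\<And>y. \<bar>y - x\<bar> < r \<Longrightarrow> \<bar>Q y - Q x - d * (y - x)\<bar> \<le> e * \<bar>y - x\<bar>"
  using assms unfolding has_field_derivative_def has_derivative_at_alt
  by (auto simp: real_norm_def)

lemma straddle_increment_ge:
  fixes Q :: "real \<Rightarrow> real"
  assumes approx: "\<And>y. \<bar>y - x\<bar> < r \<Longrightarrow> \<bar>Q y - Q x - d * (y - x)\<bar> \<le> e * \<bar>y - x\<bar>"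
    and "d \<ge> 0" "u \<le> x" "x \<le> v" "\<bar>u - x\<bar> < r" "\<bar>v - x\<bar> < r"
  shows "- e * (v - u) \<le> Q v - Q u"
proof -
  have "Q u - Q x - d * (u - x) \<le> e * (x - u)" "Q x - Q v + d * (v - x) \<le> e * (v - x)"
    using approx[of u] approx[of v] assms(3-6) by (auto simp: abs_le_iff)
  moreover have "d * (x - u) \<ge> 0" "d * (v - x) \<ge> 0"
    using assms(2-4) by auto
  ultimately show ?thesis
    by (simp add: algebra_simps)
qed

lemma negligible_tagged_division_small:
  fixes N :: "real set"
  assumes "negligible N" "\<delta> > 0"
  obtains \<gamma> where "gauge \<gamma>"
    "\<And>p. p tagged_division_of {a..b} \<Longrightarrow> \<gamma> fine p
       \<Longrightarrow> (\<Sum>(x, K)\<in>{t \<in> p. fst t \<in> N}. Sup K - Inf K) < \<delta>"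
proof -
  have "(indicat_real N has_integral 0) {a..b}"
    using assms(1) negligible by blast
  (* qualified because Polynomial.content is in scope as well *)
  from this[unfolded has_integral_real, rule_format, OF assms(2)]
  obtain \<gamma> where "gauge \<gamma>" and \<gamma>: "\<forall>p. p tagged_division_of {a..b} \<and> \<gamma> fine p
      \<longrightarrow> norm ((\<Sum>(x, K)\<in>p. Henstock_Kurzweil_Integration.content K *\<^sub>R indicat_real N x) - 0) < \<delta>"
    by blast
  have small: "(\<Sum>(x, K)\<in>{t \<in> p. fst t \<in> N}. Sup K - Inf K) < \<delta>"
    if p: "p tagged_division_of {a..b}" and fine: "\<gamma> fine p" for p
  proof -
    have "Henstock_Kurzweil_Integration.content K = Sup K - Inf K" if "(x, K) \<in> p" for x K
      using tagged_partial_division_real_interval(1,2)[OF _ that] p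
      by (metis content_real tagged_division_of_def)
    then have "(\<Sum>(x, K)\<in>p. Henstock_Kurzweil_Integration.content K *\<^sub>R indicat_real N x)
        = (\<Sum>(x, K)\<in>p. if x \<in> N then Sup K - Inf K else 0)"
      by (intro sum.cong) (auto simp: indicator_def)
    also have "\<dots> = (\<Sum>(x, K)\<in>{t \<in> p. fst t \<in> N}. Sup K - Inf K)"
      using tagged_division_of_finite[OF p]
      by (simp add: sum.inter_filter case_prod_beta)
    finally show ?thesis
      using \<gamma>[rule_format, OF conjI[OF p fine]] by (simp add: abs_less_iff)
  qed
  show thesis
    by (rule that[OF \<open>gauge \<gamma>\<close> small])
qed

lemma tagged_division_sum_increments_ge:
  fixes Q :: "real \<Rightarrow> real"
  assumes p: "p tagged_division_of {a..b}" and "a \<le> b" "G \<subseteq> p" "e \<ge> 0"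
    and increment: "\<And>x K. (x, K) \<in> G \<Longrightarrow> - e * (Sup K - Inf K) \<le> Q (Sup K) - Q (Inf K)"
  shows "- e * (b - a) \<le> (\<Sum>(x, K)\<in>G. Q (Sup K) - Q (Inf K))"
proof -
  have "p tagged_partial_division_of {a..b}"
    using p by (simp add: tagged_division_of_def)
  then have "(\<Sum>(x, K)\<in>G. Sup K - Inf K) \<le> (\<Sum>(x, K)\<in>p. Sup K - Inf K)"
    using tagged_partial_division_real_interval(2) tagged_division_of_finite[OF p] \<open>G \<subseteq> p\<close>
    by (intro sum_mono2) auto
  also have "\<dots> = b - a"
    using additive_tagged_division_1[OF \<open>a \<le> b\<close> p, of id] by (simp add: case_prod_beta)
  finally have "- e * (b - a) \<le> (\<Sum>(x, K)\<in>G. - e * (Sup K - Inf K))"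
    using \<open>e \<ge> 0\<close> by (simp add: case_prod_beta sum_negf mult_left_mono flip: sum_distrib_left)
  also have "\<dots> \<le> (\<Sum>(x, K)\<in>G. Q (Sup K) - Q (Inf K))"
    using increment by (intro sum_mono) auto
  finally show ?thesis .
qed

(* Cousin's lemma with two gauges. At a tag outside N the derivative D x \<ge> 0 approximates Q, so
   by the straddle lemma that tag's interval loses at most e times its length. The tags in N cover
   total length < \<delta> because N is negligible, so absolute continuity bounds their loss by e. *)
lemma abs_cont_on_nonneg_deriv_imp_almost_le:
  fixes Q D :: "real \<Rightarrow> real"
  assumes ac: "abs_cont_on {a..b} Q" and "a \<le> b" and N: "negligible N"
    and deriv: "\<And>x. x \<in> {a..b} - N \<Longrightarrow> (Q has_real_derivative D x) (at x)"
    and nonneg: "\<And>x. x \<in> {a..b} - N \<Longrightarrow> D x \<ge> 0"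
    and "e > 0"
  shows "Q a \<le> Q b + e * (b - a) + e"
proof -
  obtain \<delta> where "\<delta> > 0" and small_variation: "\<And>B. B tagged_partial_division_of {a..b}
      \<Longrightarrow> (\<Sum>(x, K)\<in>B. Sup K - Inf K) < \<delta> \<Longrightarrow> (\<Sum>(x, K)\<in>B. norm (Q (Sup K) - Q (Inf K))) < e"
    by (elim abs_cont_on_tagged_partial_division[OF ac \<open>e > 0\<close>])
  obtain \<gamma> where "gauge \<gamma>" and small_bad: "\<And>p. p tagged_division_of {a..b} \<Longrightarrow> \<gamma> fine p
      \<Longrightarrow> (\<Sum>(x, K)\<in>{t \<in> p. fst t \<in> N}. Sup K - Inf K) < \<delta>"
    by (elim negligible_tagged_division_small[OF N \<open>\<delta> > 0\<close>])
  have "\<exists>r>0. x \<in> {a..b} - N \<longrightarrow>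
      (\<forall>y. \<bar>y - x\<bar> < r \<longrightarrow> \<bar>Q y - Q x - D x * (y - x)\<bar> \<le> e * \<bar>y - x\<bar>)" for x
    using has_real_derivative_local_bound[OF deriv \<open>e > 0\<close>, of x] zero_less_one by metis
  then obtain r where r: "\<And>x. r x > 0" and approx: "\<And>x y. x \<in> {a..b} - N \<Longrightarrow> \<bar>y - x\<bar> < r x
      \<Longrightarrow> \<bar>Q y - Q x - D x * (y - x)\<bar> \<le> e * \<bar>y - x\<bar>"
    by metis
  obtain p where p: "p tagged_division_of {a..b}" and fine: "(\<lambda>x. \<gamma> x \<inter> ball x (r x)) fine p"
    using fine_division_exists_real[OF gauge_Int[OF \<open>gauge \<gamma>\<close> gauge_ball_dependent]] r by metis
  have partial: "p tagged_partial_division_of {a..b}"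
    using p by (simp add: tagged_division_of_def)
  define B where "B = {t \<in> p. fst t \<in> N}"
  have "B \<subseteq> p" "finite p"
    using p by (auto simp: B_def)
  have "- e * (Sup K - Inf K) \<le> Q (Sup K) - Q (Inf K)" if "(x, K) \<in> p - B" for x K
  proof (rule straddle_increment_ge[OF approx])
    note interval = tagged_partial_division_real_interval[OF partial, of x K]
    have "x \<in> K" "K \<subseteq> ball x (r x)"
      using that p fine by (auto simp: fine_Int dest: fineD)
    moreover have "Inf K \<in> K" "Sup K \<in> K"
      using interval that by (metis atLeastAtMost_iff order_refl DiffD1)+
    ultimately show "Inf K \<le> x" "x \<le> Sup K" "\<bar>Inf K - x\<bar> < r x" "\<bar>Sup K - x\<bar> < r x"
      using interval that by (auto simp: dist_real_def abs_minus_commute subset_iff)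
    show "x \<in> {a..b} - N" "D x \<ge> 0"
      using that interval \<open>x \<in> K\<close> nonneg B_def by auto
  qed
  then have good_sum: "- e * (b - a) \<le> (\<Sum>(x, K)\<in>p - B. Q (Sup K) - Q (Inf K))"
    using \<open>e > 0\<close> by (intro tagged_division_sum_increments_ge[OF p \<open>a \<le> b\<close>]) auto
  have "(\<Sum>(x, K)\<in>B. norm (Q (Sup K) - Q (Inf K))) < e"
    using small_variation tagged_partial_division_subset[OF partial \<open>B \<subseteq> p\<close>]
      small_bad[OF p] fine by (simp add: B_def fine_Int)
  moreover have "- (\<Sum>(x, K)\<in>B. norm (Q (Sup K) - Q (Inf K))) \<le> (\<Sum>(x, K)\<in>B. Q (Sup K) - Q (Inf K))"
    unfolding sum_negf[symmetric] by (intro sum_mono) auto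
  ultimately have bad_sum: "- e \<le> (\<Sum>(x, K)\<in>B. Q (Sup K) - Q (Inf K))"
    by linarith
  have "Q b - Q a = (\<Sum>(x, K)\<in>p. Q (Sup K) - Q (Inf K))"
    using additive_tagged_division_1[OF \<open>a \<le> b\<close> p, of Q] by simp
  also have "\<dots> = (\<Sum>(x, K)\<in>p - B. Q (Sup K) - Q (Inf K)) + (\<Sum>(x, K)\<in>B. Q (Sup K) - Q (Inf K))"
    using \<open>B \<subseteq> p\<close> \<open>finite p\<close> by (simp add: sum.subset_diff)
  finally show ?thesis
    using good_sum bad_sum by linarith
qed

lemma abs_cont_on_nonneg_deriv_imp_le:
  fixes Q D :: "real \<Rightarrow> real"
  assumes "abs_cont_on {a..b} Q" "a \<le> b" "negligible N"
    and "\<And>x. x \<in> {a..b} - N \<Longrightarrow> (Q has_real_derivative D x) (at x)"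
    and "\<And>x. x \<in> {a..b} - N \<Longrightarrow> D x \<ge> 0"
  shows "Q a \<le> Q b"
proof (rule field_le_epsilon)
  fix \<epsilon> :: real
  assume "\<epsilon> > 0"
  define e where "e = \<epsilon> / (b - a + 1)"
  have "b - a + 1 > 0"
    using \<open>a \<le> b\<close> by linarith
  then have "e > 0"
    using \<open>\<epsilon> > 0\<close> unfolding e_def by simp
  have "e * (b - a) + e = e * (b - a + 1)"
    by (simp add: algebra_simps)
  also have "\<dots> = \<epsilon>"
    using \<open>b - a + 1 > 0\<close> by (simp add: e_def)
  finally show "Q a \<le> Q b + \<epsilon>"
    using abs_cont_on_nonneg_deriv_imp_almost_le[OF assms \<open>e > 0\<close>] by linarith
qed

lemma loc_abs_cont_AE_nonneg_deriv_imp_mono: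
  fixes Q D :: "real \<Rightarrow> real"
  assumes ac: "loc_abs_cont Q"
    and deriv: "AE x in lborel. (Q has_real_derivative D x) (at x) \<and> D x \<ge> 0"
  shows "mono Q"
proof -
  from deriv obtain N where N: "{x \<in> space lborel. \<not> ((Q has_real_derivative D x) (at x) \<and> D x \<ge> 0)} \<subseteq> N"
    "emeasure lborel N = 0" "N \<in> sets lborel"
    by (rule AE_E)
  then have "N \<in> null_sets lebesgue"
    by (intro null_sets_completionI) auto
  then have "negligible N"
    by (simp add: negligible_iff_null_sets)
  show ?thesis
  proof (rule monoI)
    fix x y :: real
    assume "x \<le> y"
    show "Q x \<le> Q y"
      by (rule abs_cont_on_nonneg_deriv_imp_le[OF _ \<open>x \<le> y\<close> \<open>negligible N\<close>, of Q D])
        (use ac N(1) in \<open>auto simp: loc_abs_cont_def\<close>)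
  qed
qed

lemma mono_integrable_lborel_eq_0:
  fixes Q :: "real \<Rightarrow> real"
  assumes "mono Q" "integrable lborel Q"
  shows "Q x = 0"
proof (rule ccontr)
  assume "Q x \<noteq> 0"
  define I where "I = (\<integral>y. \<bar>Q y\<bar> \<partial>lborel)"
  have bound: "real n * \<bar>Q x\<bar> \<le> I" for n :: nat
  proof -
    define A where "A = (if Q x > 0 then {x..x + real n} else {x - real n..x})"
    have "\<bar>Q x\<bar> * indicator A y \<le> \<bar>Q y\<bar>" for y
      using monoD[OF \<open>mono Q\<close>, of x y] monoD[OF \<open>mono Q\<close>, of y x]
      by (auto simp: A_def indicator_def split: if_splits)
    have "measure lborel A = real n"
      by (simp add: A_def)
    then have "real n * \<bar>Q x\<bar> = (\<integral>y. \<bar>Q x\<bar> * indicator A y \<partial>lborel)"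
      by simp
    also have "\<dots> \<le> I"
      unfolding I_def using assms(2) \<open>\<And>y. \<bar>Q x\<bar> * indicator A y \<le> \<bar>Q y\<bar>\<close>
      by (intro integral_mono) (auto simp: A_def)
    finally show ?thesis .
  qed
  obtain n :: nat where "I / \<bar>Q x\<bar> < real n"
    using reals_Archimedean2 by blast
  then have "I < real n * \<bar>Q x\<bar>"
    using \<open>Q x \<noteq> 0\<close> by (simp add: field_simps)
  with bound[of n] show False
    by linarith
qed

lemma integrable_loc_abs_cont_deriv_ge_imp_AE_zero:
  fixes Q D W :: "real \<Rightarrow> real"
  assumes "loc_abs_cont Q" "integrable lborel Q"
    and deriv: "AE x in lborel. (Q has_real_derivative D x) (at x) \<and> D x \<ge> W x"
    and "\<And>x. W x \<ge> 0"
  shows "AE x in lborel. W x = 0"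
proof -
  have "AE x in lborel. (Q has_real_derivative D x) (at x) \<and> D x \<ge> 0"
    using deriv by eventually_elim (use assms(4) order_trans in blast)
  then have "mono Q"
    by (rule loc_abs_cont_AE_nonneg_deriv_imp_mono[OF assms(1)])
  then have "Q = (\<lambda>_. 0)"
    using mono_integrable_lborel_eq_0 assms(2) by blast
  from deriv show ?thesis
  proof eventually_elim
    case (elim x)
    then have "D x = 0"
      using DERIV_unique DERIV_const \<open>Q = (\<lambda>_. 0)\<close> by blast
    then show ?case
      using elim assms(4)[of x] by linarith
  qed
qed

section \<open>Eigenfunctions under a potential gap\<close>

lemma norm_cis_diff_le: "norm (cis s - cis t) \<le> \<bar>s - t\<bar>"
proof -
  have "(cis has_derivative (\<lambda>h. h *\<^sub>R (\<i> * cis x))) (at x within UNIV)" for x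
    using has_derivative_cis[OF has_derivative_ident] by simp
  moreover have "onorm (\<lambda>h::real. h *\<^sub>R (\<i> * cis x)) \<le> 1" for x
    by (simp add: onorm_scaleR_left[OF bounded_linear_ident] onorm_id norm_mult)
  ultimately show ?thesis
    using differentiable_bound[OF convex_UNIV, of cis "\<lambda>x h. h *\<^sub>R (\<i> * cis x)" 1 s t] by simp
qed

lemma norm_triple_product_diff_le:
  fixes c1 c2 a1 a2 b1 b2 :: complex
  assumes "norm c1 = 1" "norm a1 \<le> K" "norm a2 \<le> K" "norm b2 \<le> K"
  shows "norm (c2 * cnj a2 * b2 - c1 * cnj a1 * b1)
    \<le> K * K * norm (c2 - c1) + K * norm (a2 - a1) + K * norm (b2 - b1)"
proof -
  have "K \<ge> 0"
    using assms(2) norm_ge_zero order_trans by blast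
  have "c2 * cnj a2 * b2 - c1 * cnj a1 * b1
      = (c2 - c1) * cnj a2 * b2 + c1 * cnj (a2 - a1) * b2 + c1 * cnj a1 * (b2 - b1)"
    by (simp add: algebra_simps)
  also have "norm \<dots> \<le> norm ((c2 - c1) * cnj a2 * b2) + norm (c1 * cnj (a2 - a1) * b2)
      + norm (c1 * cnj a1 * (b2 - b1))"
    by (meson add_mono norm_triangle_ineq order_refl order_trans)
  also have "\<dots> = norm (c2 - c1) * (norm a2 * norm b2) + norm (a2 - a1) * norm b2
      + norm a1 * norm (b2 - b1)"
    using assms(1) by (simp add: norm_mult del: complex_cnj_diff)
  also have "\<dots> \<le> norm (c2 - c1) * (K * K) + norm (a2 - a1) * K + K * norm (b2 - b1)"
    using assms(2-4) \<open>K \<ge> 0\<close> by (intro add_mono mult_left_mono mult_right_mono mult_mono) auto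
  finally show ?thesis
    by (simp add: algebra_simps)
qed

lemma loc_abs_cont_bounded:
  assumes "loc_abs_cont f"
  obtains K where "K > 0" "\<And>x. x \<in> {a..b} \<Longrightarrow> norm (f x) \<le> K"
proof -
  have "continuous_on {a..b} f"
    using loc_abs_cont_isCont[OF assms] by (intro continuous_at_imp_continuous_on) auto
  then have "bounded (f ` {a..b})"
    by (rule compact_imp_bounded[OF compact_continuous_image[OF _ compact_Icc]])
  then show thesis
    using that unfolding bounded_pos by blast
qed

lemma loc_abs_cont_phase_product:
  fixes \<phi> :: "real \<Rightarrow> real" and u v :: "real \<Rightarrow> complex"
  assumes ac: "loc_abs_cont \<phi>" "loc_abs_cont u" "loc_abs_cont v"
  shows "loc_abs_cont (\<lambda>x. Re (cis (\<phi> x) * cnj (u x) * v x))"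
  unfolding loc_abs_cont_def
proof (intro allI)
  fix a b :: real
  let ?F = "\<lambda>x. (\<phi> x, u x, v x)"
  have uv: "loc_abs_cont (\<lambda>x. (u x, v x))"
    using ac unfolding loc_abs_cont_def by (blast intro: abs_cont_on_Pair)
  then have "abs_cont_on {a..b} ?F"
    using ac(1) unfolding loc_abs_cont_def by (auto intro: abs_cont_on_Pair[of _ \<phi>])
  obtain K where "K > 0" and K: "\<And>x. x \<in> {a..b} \<Longrightarrow> norm (u x, v x) \<le> K"
    by (elim loc_abs_cont_bounded[OF uv, where a = a and b = b])
  show "abs_cont_on {a..b} (\<lambda>x. Re (cis (\<phi> x) * cnj (u x) * v x))"
  proof (rule abs_cont_on_dominated[OF \<open>abs_cont_on {a..b} ?F\<close>])
    show "K * K + 2 * K > 0"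
      using \<open>K > 0\<close> by (simp add: add_pos_pos)
    fix x y
    assume "x \<in> {a..b}" "y \<in> {a..b}"
    then have bounds: "norm (u x) \<le> K" "norm (u y) \<le> K" "norm (v y) \<le> K"
      using K norm_fst_le[of "u x" "v x"] norm_fst_le[of "u y" "v y"] norm_snd_le[of "v y" "u y"]
      by force+
    have "?F y - ?F x = (\<phi> y - \<phi> x, u y - u x, v y - v x)"
      by simp
    then have diffs: "\<bar>\<phi> y - \<phi> x\<bar> \<le> norm (?F y - ?F x)" "norm (u y - u x) \<le> norm (?F y - ?F x)"
      "norm (v y - v x) \<le> norm (?F y - ?F x)"
      using norm_fst_le[of "\<phi> y - \<phi> x" "(u y - u x, v y - v x)"]
        norm_snd_le[of "(u y - u x, v y - v x)" "\<phi> y - \<phi> x"]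
        norm_fst_le[of "u y - u x" "v y - v x"] norm_snd_le[of "v y - v x" "u y - u x"]
      by auto
    have "norm (Re (cis (\<phi> y) * cnj (u y) * v y) - Re (cis (\<phi> x) * cnj (u x) * v x))
        \<le> norm (cis (\<phi> y) * cnj (u y) * v y - cis (\<phi> x) * cnj (u x) * v x)"
      using abs_Re_le_cmod by (metis minus_complex.sel(1) real_norm_def)
    also have "\<dots> \<le> K * K * norm (cis (\<phi> y) - cis (\<phi> x)) + K * norm (u y - u x) + K * norm (v y - v x)"
      by (rule norm_triple_product_diff_le) (use bounds in auto)
    also have "\<dots> \<le> K * K * norm (?F y - ?F x) + K * norm (?F y - ?F x) + K * norm (?F y - ?F x)"
      using order_trans[OF norm_cis_diff_le diffs(1)] diffs(2,3) \<open>K > 0\<close>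
      by (intro add_mono mult_left_mono) auto
    also have "\<dots> = (K * K + 2 * K) * norm (?F y - ?F x)"
      by (simp add: algebra_simps)
    finally show "norm (Re (cis (\<phi> y) * cnj (u y) * v y) - Re (cis (\<phi> x) * cnj (u x) * v x))
        \<le> (K * K + 2 * K) * norm (?F y - ?F x)" .
  qed
qed

lemma integrable_phase_product:
  fixes \<phi> :: "real \<Rightarrow> real" and u v :: "real \<Rightarrow> complex"
  assumes "L2 u" "L2 v" "(\<lambda>x. Re (cis (\<phi> x) * cnj (u x) * v x)) \<in> borel_measurable lborel"
  shows "integrable lborel (\<lambda>x. Re (cis (\<phi> x) * cnj (u x) * v x))"
proof (rule Bochner_Integration.integrable_bound[OF _ assms(3) AE_I2])
  show "integrable lborel (\<lambda>x. (cmod (u x))\<^sup>2 + (cmod (v x))\<^sup>2)"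
    using assms(1,2) unfolding L2_def by simp
  fix x
  have "\<bar>Re (cis (\<phi> x) * cnj (u x) * v x)\<bar> \<le> cmod (u x) * cmod (v x)"
    using abs_Re_le_cmod[of "cis (\<phi> x) * cnj (u x) * v x"] by (simp add: norm_mult)
  moreover have "2 * (cmod (u x) * cmod (v x)) \<le> (cmod (u x))\<^sup>2 + (cmod (v x))\<^sup>2"
    using power2_diff[of "cmod (u x)" "cmod (v x)"] zero_le_power2[of "cmod (u x) - cmod (v x)"] by linarith
  moreover have "cmod (u x) * cmod (v x) \<ge> 0"
    by simp
  ultimately show "norm (Re (cis (\<phi> x) * cnj (u x) * v x)) \<le> norm ((cmod (u x))\<^sup>2 + (cmod (v x))\<^sup>2)"
    by simp
qed

lemma eigen_phase_product_has_real_derivative: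
  fixes u1 u2 :: "real \<Rightarrow> complex" and \<phi> :: "real \<Rightarrow> real"
  assumes d1: "(u1 has_vector_derivative v1) (at x)" and d2: "(u2 has_vector_derivative v2) (at x)"
    and d\<phi>: "(\<phi> has_vector_derivative p) (at x)"
    and eq1: "\<i> * v1 - \<i> * q * u2 x = of_real l * u1 x"
    and eq2: "\<i> * cnj q * u1 x - \<i> * v2 = of_real l * u2 x"
    and polar: "q = of_real (cmod q) * cis (\<phi> x)"
  shows "((\<lambda>y. Re (cis (\<phi> y) * cnj (u1 y) * u2 y)) has_real_derivative
      cmod q * ((cmod (u1 x))\<^sup>2 + (cmod (u2 x))\<^sup>2) - (2 * l + p) * Im (cis (\<phi> x) * cnj (u1 x) * u2 x)) (at x)"
proof -
  define c a b where "c = cis (\<phi> x)" and "a = u1 x" and "b = u2 x"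
  have "((\<lambda>y. cis (\<phi> y)) has_derivative (\<lambda>h. (h *\<^sub>R p) *\<^sub>R (\<i> * c))) (at x)"
    using has_derivative_cis[OF d\<phi>[unfolded has_vector_derivative_def]] by (simp add: c_def)
  then have "((\<lambda>y. cis (\<phi> y)) has_vector_derivative (\<i> * of_real p * c)) (at x)"
    unfolding has_vector_derivative_def by (simp add: scaleR_conv_of_real algebra_simps)
  then have "((\<lambda>y. cis (\<phi> y) * cnj (u1 y) * u2 y) has_vector_derivative
      c * cnj a * v2 + (c * cnj v1 + \<i> * of_real p * c * cnj a) * b) (at x)"
    unfolding a_def b_def c_def by (intro has_vector_derivative_mult has_vector_derivative_cnj d1 d2)
  moreover have "c * cnj a * v2 + (c * cnj v1 + \<i> * of_real p * c * cnj a) * b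
      = of_real (cmod q * ((cmod a)\<^sup>2 + (cmod b)\<^sup>2)) + \<i> * of_real (2 * l + p) * (c * cnj a * b)"
  proof -
    have "\<i> * v1 = \<i> * (q * b - \<i> * of_real l * a)" "\<i> * v2 = \<i> * (cnj q * a + \<i> * of_real l * b)"
      using eq1 eq2 unfolding a_def b_def by (simp_all add: algebra_simps)
    then have "v1 = q * b - \<i> * of_real l * a" "v2 = cnj q * a + \<i> * of_real l * b"
      by simp_all
    moreover have "cnj q = of_real (cmod q) * cnj c" "c * cnj c = 1"
      using polar unfolding c_def by (metis complex_cnj_complex_of_real complex_cnj_mult) (simp add: cis_cnj cis_mult)
    moreover have "cnj a * a = of_real ((cmod a)\<^sup>2)" "cnj b * b = of_real ((cmod b)\<^sup>2)"
      using complex_norm_square[of a] complex_norm_square[of b] by (simp_all add: mult.commute)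
    ultimately show ?thesis
      by simp algebra
  qed
  ultimately have "((\<lambda>y. cis (\<phi> y) * cnj (u1 y) * u2 y) has_vector_derivative
      of_real (cmod q * ((cmod a)\<^sup>2 + (cmod b)\<^sup>2)) + \<i> * of_real (2 * l + p) * (c * cnj a * b)) (at x)"
    by simp
  from bounded_linear.has_vector_derivative[OF bounded_linear_Re this]
  show ?thesis
    unfolding has_real_derivative_iff_has_vector_derivative a_def b_def c_def by simp
qed

lemma cross_term_lower_bound:
  fixes t y m \<delta> \<alpha> \<beta> :: real
  assumes "\<bar>t\<bar> \<le> m - \<delta>" "\<bar>y\<bar> \<le> \<alpha> * \<beta>"
  shows "\<delta> * (\<alpha>\<^sup>2 + \<beta>\<^sup>2) \<le> m * (\<alpha>\<^sup>2 + \<beta>\<^sup>2) - 2 * t * y"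
proof -
  have "t * y \<le> \<bar>t\<bar> * \<bar>y\<bar>"
    by (metis abs_ge_self abs_mult)
  also have "\<dots> \<le> \<bar>t\<bar> * (\<alpha> * \<beta>)"
    using assms(2) by (rule mult_left_mono) simp
  finally have "t * y \<le> \<bar>t\<bar> * (\<alpha> * \<beta>)" .
  moreover have "2 * (\<alpha> * \<beta>) \<le> \<alpha>\<^sup>2 + \<beta>\<^sup>2"
    using power2_diff[of \<alpha> \<beta>] zero_le_power2[of "\<alpha> - \<beta>"] by linarith
  then have "\<bar>t\<bar> * (2 * (\<alpha> * \<beta>)) \<le> \<bar>t\<bar> * (\<alpha>\<^sup>2 + \<beta>\<^sup>2)"
    by (rule mult_left_mono) simp
  moreover have "\<bar>t\<bar> * (\<alpha>\<^sup>2 + \<beta>\<^sup>2) \<le> (m - \<delta>) * (\<alpha>\<^sup>2 + \<beta>\<^sup>2)"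
    using assms(1) by (intro mult_right_mono) auto
  ultimately show ?thesis
    by (simp add: algebra_simps)
qed

lemma eigenfunction_AE_zero_if_potential_gap:
  fixes q u1 u2 u1' u2' :: "real \<Rightarrow> complex" and \<phi> \<phi>' :: "real \<Rightarrow> real"
  assumes polar: "\<And>x. q x = complex_of_real (cmod (q x)) * cis (\<phi> x)"
    and phi_ac: "loc_abs_cont \<phi>" and phi_deriv: "ae_deriv \<phi> \<phi>'"
    and u1: "H1 u1 u1'" and u2: "H1 u2 u2'"
    and eig: "AE x in lborel. \<i> * u1' x - \<i> * q x * u2 x = complex_of_real l * u1 x \<and>
           \<i> * cnj (q x) * u1 x - \<i> * u2' x = complex_of_real l * u2 x"
    and gap: "AE x in lborel. \<bar>\<phi>' x / 2 + l\<bar> \<le> cmod (q x) - \<delta>" and "\<delta> > 0"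
  shows "AE x in lborel. u1 x = 0 \<and> u2 x = 0"
proof -
  define w where "w x = cis (\<phi> x) * cnj (u1 x) * u2 x" for x
  define W where "W x = (cmod (u1 x))\<^sup>2 + (cmod (u2 x))\<^sup>2" for x
  have u1_deriv: "ae_deriv u1 u1'" and u2_deriv: "ae_deriv u2 u2'"
    using u1 u2 unfolding H1_def by blast+
  have ac: "loc_abs_cont (\<lambda>x. Re (w x))"
    using loc_abs_cont_phase_product[OF phi_ac] u1 u2 by (simp add: w_def H1_def)
  have Im_le: "\<bar>Im (w x)\<bar> \<le> cmod (u1 x) * cmod (u2 x)" for x
    using abs_Im_le_cmod[of "w x"] by (simp add: w_def norm_mult)
  have "(\<lambda>x. Re (w x)) \<in> borel_measurable lborel"
    using loc_abs_cont_isCont[OF ac] by (simp add: continuous_at_imp_continuous_on borel_measurable_continuous_onI)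
  then have "integrable lborel (\<lambda>x. Re (w x))"
    using integrable_phase_product u1 u2 unfolding w_def H1_def by blast
  moreover have "AE x in lborel. ((\<lambda>x. Re (w x)) has_real_derivative
      cmod (q x) * W x - (2 * l + \<phi>' x) * Im (w x)) (at x) \<and> \<delta> * W x \<le> cmod (q x) * W x - (2 * l + \<phi>' x) * Im (w x)"
    using phi_deriv u1_deriv u2_deriv eig gap unfolding ae_deriv_def
  proof eventually_elim
    case (elim x)
    have "((\<lambda>x. Re (w x)) has_real_derivative cmod (q x) * W x - (2 * l + \<phi>' x) * Im (w x)) (at x)"
      unfolding w_def W_def
      by (rule eigen_phase_product_has_real_derivative[OF elim(2,3,1) conjunct1[OF elim(4)]
          conjunct2[OF elim(4)] polar])
    moreover have "\<delta> * W x \<le> cmod (q x) * W x - 2 * (\<phi>' x / 2 + l) * Im (w x)"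
      unfolding W_def by (rule cross_term_lower_bound[OF _ Im_le]) (use elim in simp)
    ultimately show ?case
      by (simp add: algebra_simps)
  qed
  ultimately have "AE x in lborel. \<delta> * W x = 0"
    using \<open>\<delta> > 0\<close> by (intro integrable_loc_abs_cont_deriv_ge_imp_AE_zero[OF ac]) (auto simp: W_def)
  then show ?thesis
    by eventually_elim (use \<open>\<delta> > 0\<close> in \<open>simp add: W_def add_nonneg_eq_0_iff\<close>)
qed

lemma not_eigenvalue_if_potential_gap:
  fixes q :: "real \<Rightarrow> complex" and \<phi> \<phi>' :: "real \<Rightarrow> real"
  assumes "\<And>x. q x = complex_of_real (cmod (q x)) * cis (\<phi> x)"
    and "loc_abs_cont \<phi>" "ae_deriv \<phi> \<phi>'"
    and "AE x in lborel. \<bar>\<phi>' x / 2 + l\<bar> \<le> cmod (q x) - \<delta>" "\<delta> > 0"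
  shows "\<not> is_eigenvalue q (complex_of_real l)"
  using eigenfunction_AE_zero_if_potential_gap[OF assms(1-3) _ _ _ assms(4,5)]
  unfolding is_eigenvalue_def by blast

section \<open>Essentially bounded functions\<close>

lemma Linf_const: "Linf (\<lambda>x. c)"
  by (auto simp: Linf_def)

lemma Linf_add:
  assumes "Linf f" "Linf g"
  shows "Linf (\<lambda>x. f x + g x)"
proof -
  obtain C D where "AE x in lborel. \<bar>f x\<bar> \<le> C" "AE x in lborel. \<bar>g x\<bar> \<le> D"
    using assms unfolding Linf_def by blast
  then have "AE x in lborel. \<bar>f x + g x\<bar> \<le> C + D"
    by eventually_elim linarith
  then show ?thesis
    using assms unfolding Linf_def by auto
qed

lemma Linf_diff:
  assumes "Linf f" "Linf g"
  shows "Linf (\<lambda>x. f x - g x)"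
proof -
  obtain C D where "AE x in lborel. \<bar>f x\<bar> \<le> C" "AE x in lborel. \<bar>g x\<bar> \<le> D"
    using assms unfolding Linf_def by blast
  then have "AE x in lborel. \<bar>f x - g x\<bar> \<le> C + D"
    by eventually_elim linarith
  then show ?thesis
    using assms unfolding Linf_def by auto
qed

lemma Linf_divide:
  assumes "Linf f"
  shows "Linf (\<lambda>x. f x / c)"
proof -
  obtain C where "AE x in lborel. \<bar>f x\<bar> \<le> C"
    using assms unfolding Linf_def by blast
  then have "AE x in lborel. \<bar>f x / c\<bar> \<le> C / \<bar>c\<bar>"
    by eventually_elim (simp add: divide_right_mono)
  then show ?thesis
    using assms unfolding Linf_def by auto
qed

lemma AE_abs_le_Linf_norm:
  assumes "Linf f"
  shows "AE x in lborel. \<bar>f x\<bar> \<le> Linf_norm f"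
proof -
  obtain C where meas: "f \<in> borel_measurable lborel" and C: "AE x in lborel. \<bar>f x\<bar> \<le> C"
    using assms unfolding Linf_def by blast
  define E where "E = esssup lborel (\<lambda>x. ereal \<bar>f x\<bar>)"
  have "E \<le> ereal C"
    unfolding E_def using meas C by (intro esssup_I) (auto elim!: eventually_mono)
  moreover have "esssup lborel (\<lambda>x::real. ereal 0) \<le> E"
    unfolding E_def by (rule esssup_mono) auto
  moreover have "esssup lborel (\<lambda>x::real. ereal 0) = ereal 0"
    by (rule esssup_const) simp
  ultimately obtain r where "E = ereal r"
    by (cases E) auto
  moreover have "AE x in lborel. ereal \<bar>f x\<bar> \<le> E"
    unfolding E_def by (rule esssup_AE)
  ultimately show ?thesis
    unfolding Linf_norm_def E_def[symmetric] by (auto elim!: eventually_mono)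
qed

lemma Linf_pos_part:
  assumes "Linf f"
  shows "Linf (pos_part f)"
proof -
  obtain C where "f \<in> borel_measurable lborel" and bound: "AE x in lborel. \<bar>f x\<bar> \<le> C"
    using assms unfolding Linf_def by blast
  moreover from bound have "AE x in lborel. \<bar>pos_part f x\<bar> \<le> C"
    by eventually_elim (auto simp: pos_part_def)
  ultimately show ?thesis
    unfolding Linf_def pos_part_def by auto
qed

lemma Linf_neg_part:
  assumes "Linf f"
  shows "Linf (neg_part f)"
proof -
  obtain C where "f \<in> borel_measurable lborel" and bound: "AE x in lborel. \<bar>f x\<bar> \<le> C"
    using assms unfolding Linf_def by blast
  moreover from bound have "AE x in lborel. \<bar>neg_part f x\<bar> \<le> C"
    by eventually_elim (auto simp: neg_part_def)
  ultimately show ?thesis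
    unfolding Linf_def neg_part_def by auto
qed

lemma AE_le_Linf_norm_pos_part:
  assumes "Linf f"
  shows "AE x in lborel. f x \<le> Linf_norm (pos_part f)"
  using AE_abs_le_Linf_norm[OF Linf_pos_part[OF assms]]
  by eventually_elim (auto simp: pos_part_def)

lemma AE_neg_le_Linf_norm_neg_part:
  assumes "Linf f"
  shows "AE x in lborel. - f x \<le> Linf_norm (neg_part f)"
  using AE_abs_le_Linf_norm[OF Linf_neg_part[OF assms]]
  by eventually_elim (auto simp: neg_part_def)

theorem corollary2p4:
  fixes q :: "real \<Rightarrow> complex" and \<phi> \<phi>' :: "real \<Rightarrow> real"
  assumes polar: "\<And>x. q x = complex_of_real (cmod (q x)) * cis (\<phi> x)"
    and q_Linf: "Linf (\<lambda>x. cmod (q x))"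
    and q_nz: "\<And>x. q x \<noteq> 0"
    and phi_ac: "loc_abs_cont \<phi>"
    and phi_deriv: "ae_deriv \<phi> \<phi>'"
    and dphi_Linf: "Linf \<phi>'"
  shows "(\<forall>lam::real. is_eigenvalue q (complex_of_real lam) \<longrightarrow>
            (\<forall>c::real.
               c - lam \<le> Linf_norm (pos_part (\<lambda>x. \<phi>' x / 2 - cmod (q x) + c))
             \<or> c + lam \<le> Linf_norm (neg_part (\<lambda>x. \<phi>' x / 2 + cmod (q x) - c))))
       \<and> (\<forall>c::real. c > 0 \<longrightarrow>
            (AE x in lborel. cmod (q x) \<ge> c + \<bar>\<phi>' x\<bar> / 2) \<longrightarrow>
            (\<forall>lam::real. lam \<in> {-c<..<c} \<longrightarrow> \<not> is_eigenvalue q (complex_of_real lam)))"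
proof (intro conjI allI impI)
  fix lam c :: real
  assume "is_eigenvalue q (complex_of_real lam)"
  let ?N1 = "Linf_norm (pos_part (\<lambda>x. \<phi>' x / 2 - cmod (q x) + c))"
  let ?N2 = "Linf_norm (neg_part (\<lambda>x. \<phi>' x / 2 + cmod (q x) - c))"
  have "Linf (\<lambda>x. \<phi>' x / 2 - cmod (q x) + c)" "Linf (\<lambda>x. \<phi>' x / 2 + cmod (q x) - c)"
    by (intro Linf_add Linf_diff Linf_divide Linf_const dphi_Linf q_Linf)+
  from AE_le_Linf_norm_pos_part[OF this(1)] AE_neg_le_Linf_norm_neg_part[OF this(2)]
  have "AE x in lborel. \<bar>\<phi>' x / 2 + lam\<bar> \<le> cmod (q x) - min (c - lam - ?N1) (c + lam - ?N2)"
    by eventually_elim (auto simp: abs_le_iff min_def)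
  then show "c - lam \<le> ?N1 \<or> c + lam \<le> ?N2"
    using not_eigenvalue_if_potential_gap[OF polar phi_ac phi_deriv]
      \<open>is_eigenvalue q (complex_of_real lam)\<close> by force
next
  fix c lam :: real
  assume large: "AE x in lborel. cmod (q x) \<ge> c + \<bar>\<phi>' x\<bar> / 2" and "lam \<in> {-c<..<c}"
  from large have "AE x in lborel. \<bar>\<phi>' x / 2 + lam\<bar> \<le> cmod (q x) - (c - \<bar>lam\<bar>)"
    by eventually_elim (auto split: abs_split)
  then show "\<not> is_eigenvalue q (complex_of_real lam)"
    using not_eigenvalue_if_potential_gap[OF polar phi_ac phi_deriv] \<open>lam \<in> {-c<..<c}\<close> by auto
qed

end
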